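(* Fix $r\ge1$. For $K>r$ and $\theta>0$, let $V_1,\dots,V_{K-1}$ be independent with $V_i\sim\mathrm{Beta}(\frac{\theta}{K}+1,(K-i)\frac{\theta}{K})$, and set $Y_1^K=V_1$, $Y_i^K=(1-V_1)\cdots(1-V_{i-1})V_i$ for $2\le i\le K-1$. For fixed $K$, as $\theta\to\infty$ the laws of $(Y_1^K,\dots,Y_r^K)$ satisfy an LDP on $\Delta_r=\{(y_1,\dots,y_r): y_k\ge0,\ \sum_k y_k\le1\}$ with speed $\theta$ and some rate function $J_r^K$. Likewise, with $X_1=U_1$, $X_n=(1-U_1)\cdots(1-U_{n-1})U_n$ for i.i.d. $U_k\sim\mathrm{Beta}(1,\theta)$, the laws of $(X_1,\dots,X_r)$ satisfy an LDP on $\Delta_r$ with speed $\theta$ and rate function $S_r(x_1,\dots,x_r)=\log\frac{1}{1-\sum_{k=1}^r x_k}$ if $\sum_{k=1}^r x_k<1$ and $\infty$ otherwise. Then the rate functions $J_r^K$ do not converge to $S_r$ as $K\to\infty$; that is, there is a point $\mathbf x\in\Delta_r$ with $\lim_{K\to\infty}J_r^K(\mathbf x)\neq S_r(\mathbf x)$.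
   Context: $(Y_1^K,\dots,Y_{K-1}^K)$ is the size-biased sampling of a symmetric $\mathrm{Dirichlet}(\theta/K,\dots,\theta/K)$ distribution; $(X_1,X_2,\dots)$ is the GEM representation. An LDP with speed $\theta$ refers to normalization $\theta^{-1}\log$ as $\theta\to\infty$. *)

theory Defs
  imports "HOL-Probability.Probability"
begin

definition beta_measure :: "real \<Rightarrow> real \<Rightarrow> real measure" where
  "beta_measure a b = density lborel
     (\<lambda>x. ennreal (indicator {0<..<1} x * x powr (a - 1) * (1 - x) powr (b - 1)
                    / (Beta a b :: real)))"

text \<open>Points of R^r are represented as functions nat => real vanishing from index r on;
  coordinate k (0-based) is y_{k+1}.\<close>
definition simplex_r :: "nat \<Rightarrow> (nat \<Rightarrow> real) set" where
  "simplex_r r = {y. (\<forall>k<r. 0 \<le> y k) \<and> (\<Sum>k<r. y k) \<le> 1 \<and> (\<forall>k\<ge>r. y k = 0)}"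

definition eln :: "real \<Rightarrow> ereal" where
  "eln p = (if p \<le> 0 then -\<infinity> else ereal (ln p))"

definition rate_function :: "'a::topological_space set \<Rightarrow> ('a \<Rightarrow> ereal) \<Rightarrow> bool" where
  "rate_function X I \<longleftrightarrow> (\<forall>x\<in>X. 0 \<le> I x) \<and>
     (\<forall>c. closedin (top_of_set X) {x\<in>X. I x \<le> c})"

text \<open>Large deviation principle on X with speed theta -> infinity for the family of laws P
  (P theta A = probability that the random vector lies in A), rate function I.\<close>
definition LDP :: "(real \<Rightarrow> 'a::topological_space set \<Rightarrow> real) \<Rightarrow> 'a set \<Rightarrow> ('a \<Rightarrow> ereal) \<Rightarrow> bool" where
  "LDP P X I \<longleftrightarrow> rate_function X I \<and>
     (\<forall>F. closedin (top_of_set X) F \<longrightarrow>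
        Limsup at_top (\<lambda>\<theta>. eln (P \<theta> F) / ereal \<theta>) \<le> - (INF x\<in>F. I x)) \<and>
     (\<forall>G. openin (top_of_set X) G \<longrightarrow>
        - (INF x\<in>G. I x) \<le> Liminf at_top (\<lambda>\<theta>. eln (P \<theta> G) / ereal \<theta>))"

definition V_space :: "nat \<Rightarrow> real \<Rightarrow> (nat \<Rightarrow> real) measure" where
  "V_space K \<theta> = PiM {1..K-1}
      (\<lambda>i. beta_measure (\<theta> / real K + 1) (real (K - i) * \<theta> / real K))"

definition stick :: "(nat \<Rightarrow> real) \<Rightarrow> nat \<Rightarrow> real" where
  "stick V i = (\<Prod>j\<in>{1..<i}. (1 - V j)) * V i"

definition stick_vec :: "nat \<Rightarrow> (nat \<Rightarrow> real) \<Rightarrow> (nat \<Rightarrow> real)" where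
  "stick_vec r V = (\<lambda>k. if k < r then stick V (Suc k) else 0)"

definition lawY :: "nat \<Rightarrow> nat \<Rightarrow> real \<Rightarrow> (nat \<Rightarrow> real) set \<Rightarrow> real" where
  "lawY r K \<theta> A = measure (V_space K \<theta>) {v \<in> space (V_space K \<theta>). stick_vec r v \<in> A}"

definition S_rate :: "nat \<Rightarrow> (nat \<Rightarrow> real) \<Rightarrow> ereal" where
  "S_rate r x = (if (\<Sum>k<r. x k) < 1 then ereal (ln (1 / (1 - (\<Sum>k<r. x k)))) else \<infinity>)"

end

theory Submission
  imports Defs
begin

text \<open>The limit fails at the origin, where \<open>S_r = 0\<close>. The first coordinate \<open>Y_1^K = V_1\<close> has a
  Beta density proportional to \<open>x powr (\<theta>/K)\<close> near \<open>0\<close> whose normalising constant is at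
  least \<open>4 powr (-\<theta>)\<close>, so for fixed \<open>K\<close> the event \<open>Y_1^K < 8 powr (-K)\<close> has probability at
  most \<open>2 powr (-\<theta>)\<close>. The LDP lower bound on this
  open neighbourhood of the origin then forces \<open>J_r^K(0) \<ge> ln 2\<close> for every \<open>K > r\<close>.\<close>

lemma prob_space_beta_measure:
  assumes "0 < a" "0 < b"
  shows "prob_space (beta_measure a b)"
proof (rule prob_spaceI)
  let ?f = "\<lambda>x. x powr (a - 1) * (1 - x) powr (b - 1) / Beta a b"
  have "0 < Beta a b" using assms by (simp add: Beta_def)
  have "((\<lambda>x. x powr (a - 1) * (1 - x) powr (b - 1)) has_integral Beta a b) {0<..<1}"
    using has_integral_Beta_real[OF assms] by (simp add: has_integral_Icc_iff_Ioo)
  then have "(?f has_integral 1) {0<..<1}"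
    using has_integral_divide[of _ "Beta a b" "{0<..<1}" "Beta a b"] \<open>0 < Beta a b\<close> by simp
  then have "(\<integral>\<^sup>+ x. ennreal (indicator {0<..<1} x * ?f x) \<partial>lborel) = 1"
    using \<open>0 < Beta a b\<close> by (subst nn_integral_has_integral_lebesgue) auto
  then show "emeasure (beta_measure a b) (space (beta_measure a b)) = 1"
    unfolding beta_measure_def
    by (subst emeasure_density) (auto simp: mult.assoc)
qed

lemma Beta_ge_quarter_powr:
  fixes a b :: real
  assumes "1 \<le> a" "1 \<le> b"
  shows "(1/4) powr (a + b - 1) \<le> Beta a b"
proof -
  let ?f = "\<lambda>t. t powr (a - 1) * (1 - t) powr (b - 1)"
  let ?c = "(1/4::real) powr (a + b - 2)"
  have "?f integrable_on {0..1}" using integrable_Beta' assms by simp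
  then have int: "?f integrable_on {1/4..1/2}"
    by (rule integrable_on_subinterval) auto
  have "(1/4) powr (a + b - 1) = integral {1/4..1/2::real} (\<lambda>_. ?c)"
    using powr_add[of "1/4::real" 1 "a + b - 2"] by simp
  also have "\<dots> \<le> integral {1/4..1/2} ?f"
  proof (rule integral_le[OF _ int])
    fix t :: real assume t: "t \<in> {1/4..1/2}"
    have "?c = (1/4) powr (a - 1) * (1/4) powr (b - 1)"
      by (simp flip: powr_add)
    also have "\<dots> \<le> ?f t"
      using t assms by (intro mult_mono powr_mono2) auto
    finally show "?c \<le> ?f t" .
  qed (rule integrable_on_const, simp)
  also have "\<dots> \<le> integral {0..1} ?f"
    using int \<open>?f integrable_on {0..1}\<close> by (intro integral_subset_le) auto
  also have "\<dots> = Beta a b"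
    using has_integral_Beta_real assms by (simp add: integral_unique)
  finally show ?thesis .
qed

lemma measure_beta_measure_lessThan_le:
  fixes a b e :: real
  assumes "1 \<le> a" "1 \<le> b" "0 < e"
  shows "measure (beta_measure a b) {..<e} \<le> e powr a / Beta a b"
proof -
  interpret prob_space "beta_measure a b" using assms by (intro prob_space_beta_measure) auto
  have "0 < Beta a b" using assms by (simp add: Beta_def)
  let ?C = "e powr (a - 1) / Beta a b"
  have "emeasure (beta_measure a b) {..<e}
      = (\<integral>\<^sup>+ x. ennreal (indicator {0<..<1} x * x powr (a - 1) * (1 - x) powr (b - 1) / Beta a b)
           * indicator {..<e} x \<partial>lborel)"
    unfolding beta_measure_def by (rule emeasure_density) auto
  also have "\<dots> \<le> (\<integral>\<^sup>+ x. ennreal ?C * indicator {0..e} x \<partial>lborel)"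
  proof (intro nn_integral_mono)
    fix x :: real
    have "x powr (a - 1) * (1 - x) powr (b - 1) \<le> e powr (a - 1) * 1" if "0 < x" "x < min e 1"
      using that assms by (intro mult_mono powr_mono2 powr_le1) auto
    then show "ennreal (indicator {0<..<1} x * x powr (a - 1) * (1 - x) powr (b - 1) / Beta a b)
        * indicator {..<e} x \<le> ennreal ?C * indicator {0..e} x"
      using \<open>0 < Beta a b\<close>
      by (auto simp: indicator_def intro!: ennreal_leI divide_right_mono)
  qed
  also have "\<dots> = ennreal ?C * ennreal e"
    using assms by (subst nn_integral_cmult_indicator) auto
  also have "\<dots> = ennreal (e * ?C)"
    using assms \<open>0 < Beta a b\<close> by (simp add: ennreal_mult'[symmetric] mult.commute)
  finally have "measure (beta_measure a b) {..<e} \<le> e * ?C"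
    using \<open>0 < Beta a b\<close> assms by (simp add: emeasure_eq_measure ennreal_le_iff)
  also have "e * ?C = e powr a / Beta a b"
    using assms by (simp add: powr_diff)
  finally show ?thesis .
qed

lemma measure_PiM_component:
  assumes "\<And>i. i \<in> I \<Longrightarrow> prob_space (M i)" "i \<in> I" "A \<in> sets (M i)"
  shows "measure (PiM I M) {\<omega> \<in> space (PiM I M). \<omega> i \<in> A} = measure (M i) A"
proof -
  have "measure (M i) A = measure (distr (PiM I M) (M i) (\<lambda>\<omega>. \<omega> i)) A"
    using distr_PiM_component[of I M i] assms by simp
  also have "\<dots> = measure (PiM I M) ((\<lambda>\<omega>. \<omega> i) -` A \<inter> space (PiM I M))"
    using assms(2,3) by (intro measure_distr measurable_component_singleton) auto
  finally show ?thesis by (simp add: vimage_def Int_def conj_commute)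
qed

lemma prob_space_V_space_factor:
  assumes "0 < \<theta>" "i \<in> {1..K-1}"
  shows "prob_space (beta_measure (\<theta> / real K + 1) (real (K - i) * \<theta> / real K))"
  using assms by (intro prob_space_beta_measure) (auto intro!: add_nonneg_pos)

lemma measure_V_space_first_lessThan:
  assumes "2 \<le> K" "0 < \<theta>"
  shows "measure (V_space K \<theta>) {v \<in> space (V_space K \<theta>). v 1 < e}
       = measure (beta_measure (\<theta> / real K + 1) (real (K - 1) * \<theta> / real K)) {..<e}"
proof -
  have "measure (V_space K \<theta>) {v \<in> space (V_space K \<theta>). v 1 \<in> {..<e}}
      = measure (beta_measure (\<theta> / real K + 1) (real (K - 1) * \<theta> / real K)) {..<e}"
    unfolding V_space_def using assms
    by (intro measure_PiM_component prob_space_V_space_factor) (auto simp: beta_measure_def)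
  then show ?thesis by simp
qed

lemma lawY_first_lessThan_le:
  assumes "1 \<le> r" "r < K" "real K \<le> \<theta>"
  shows "lawY r K \<theta> {y \<in> simplex_r r. y 0 < (1/8) powr K} \<le> (1/2) powr \<theta>"
proof -
  define e where "e = (1/8::real) powr K"
  define a where "a = \<theta> / real K + 1"
  define b where "b = real (K - 1) * \<theta> / real K"
  have "2 \<le> K" "0 < \<theta>" "0 < e" using assms by (auto simp: e_def)
  have "1 \<le> \<theta> / real K" using assms by simp
  then have "1 \<le> b"
    using \<open>2 \<le> K\<close> mult_mono[of 1 "real (K - 1)" 1 "\<theta> / real K"] by (simp add: b_def)
  have "a + b - 1 = \<theta>"
    using \<open>2 \<le> K\<close> by (simp add: a_def b_def of_nat_diff field_simps)
  interpret V: prob_space "V_space K \<theta>"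
    unfolding V_space_def using \<open>0 < \<theta>\<close>
    by (intro prob_space_PiM prob_space_V_space_factor)
  have "lawY r K \<theta> {y \<in> simplex_r r. y 0 < e}
      \<le> measure (V_space K \<theta>) {v \<in> space (V_space K \<theta>). v 1 < e}"
  proof -
    have "{v \<in> space (V_space K \<theta>). v 1 < e} \<in> sets (V_space K \<theta>)"
      unfolding V_space_def using \<open>2 \<le> K\<close>
      by (intro sets_Collect_single') (simp_all add: beta_measure_def)
    then show ?thesis
      unfolding lawY_def using \<open>1 \<le> r\<close>
      by (intro V.finite_measure_mono) (auto simp: stick_vec_def stick_def)
  qed
  also have "\<dots> = measure (beta_measure a b) {..<e}"
    using measure_V_space_first_lessThan \<open>2 \<le> K\<close> \<open>0 < \<theta>\<close> by (simp add: a_def b_def)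
  also have "\<dots> \<le> e powr a / Beta a b"
    using \<open>1 \<le> b\<close> \<open>0 < e\<close> \<open>0 < \<theta>\<close> by (intro measure_beta_measure_lessThan_le) (auto simp: a_def)
  also have "\<dots> \<le> (1/8) powr \<theta> / (1/4) powr \<theta>"
  proof (intro frac_le)
    have "real K * a = \<theta> + K"
      using \<open>2 \<le> K\<close> by (simp add: a_def field_simps)
    then have "e powr a = (1/8) powr (\<theta> + K)"
      by (simp add: e_def powr_powr)
    then show "e powr a \<le> (1/8) powr \<theta>"
      by (simp add: powr_mono')
    show "(1/4) powr \<theta> \<le> Beta a b"
      using Beta_ge_quarter_powr[of a b] \<open>1 \<le> b\<close> \<open>0 < \<theta>\<close> \<open>a + b - 1 = \<theta>\<close> by (simp add: a_def)
  qed simp_all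
  also have "\<dots> = (1/2) powr \<theta>"
    by (simp flip: powr_divide)
  finally show ?thesis by (simp add: e_def)
qed

lemma eln_div_le_ln:
  assumes "0 < \<theta>" "0 < c" "p \<le> c powr \<theta>"
  shows "eln p / ereal \<theta> \<le> ereal (ln c)"
proof (cases "0 < p")
  case True
  have "ln p \<le> ln (c powr \<theta>)"
    using True assms(3) by (subst ln_le_cancel_iff) auto
  also have "\<dots> = \<theta> * ln c"
    using assms(2) by (simp add: ln_powr)
  finally have "ln p / \<theta> \<le> ln c"
    using assms(1) by (simp add: pos_divide_le_eq mult.commute)
  then show ?thesis
    using True assms(1) by (simp add: eln_def)
next
  case False
  then show ?thesis
    using assms(1) by (simp add: eln_def)
qed

lemma LDP_rate_ge:
  assumes "LDP P X I" "openin (top_of_set X) G" "x \<in> G"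
    and "\<forall>\<^sub>F \<theta> in at_top. eln (P \<theta> G) / ereal \<theta> \<le> ereal c"
  shows "ereal (- c) \<le> I x"
proof -
  have "- I x \<le> - (INF y\<in>G. I y)"
    using \<open>x \<in> G\<close> by (simp add: INF_lower)
  also have "\<dots> \<le> Liminf at_top (\<lambda>\<theta>. eln (P \<theta> G) / ereal \<theta>)"
    using assms(1,2) unfolding LDP_def by blast
  also have "\<dots> \<le> Limsup at_top (\<lambda>\<theta>. eln (P \<theta> G) / ereal \<theta>)"
    by (rule Liminf_le_Limsup) simp
  also have "\<dots> \<le> ereal c"
    using assms(4) by (rule Limsup_bounded)
  finally have "- ereal c \<le> I x"
    by (rule ereal_uminus_le_reorder[THEN iffD1])
  then show ?thesis
    by simp
qed

theorem theorem2p5: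
  fixes r :: nat and J :: "nat \<Rightarrow> (nat \<Rightarrow> real) \<Rightarrow> ereal"
  assumes "r \<ge> 1"
    and "\<And>K. K > r \<Longrightarrow> LDP (lawY r K) (simplex_r r) (J K)"
  shows "\<exists>x\<in>simplex_r r. \<not> ((\<lambda>K. J K x) \<longlonglongrightarrow> S_rate r x)"
proof
  let ?zero = "\<lambda>_. 0 :: real"
  show "?zero \<in> simplex_r r" by (simp add: simplex_r_def)
  have "ereal (ln 2) \<le> J K ?zero" if "r < K" for K
  proof -
    let ?G = "{y \<in> simplex_r r. y 0 < (1/8) powr K}"
    have "open ((\<lambda>y :: nat \<Rightarrow> real. y 0) -` {..<(1/8) powr K})"
      by (rule open_vimage) auto
    moreover have "?G = simplex_r r \<inter> (\<lambda>y. y 0) -` {..<(1/8) powr K}"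
      by auto
    ultimately have "openin (top_of_set (simplex_r r)) ?G"
      by (simp add: openin_open_Int)
    moreover have "\<forall>\<^sub>F \<theta> in at_top. eln (lawY r K \<theta> ?G) / ereal \<theta> \<le> ereal (ln (1/2))"
    proof (rule eventually_at_top_linorderI)
      fix \<theta> assume "real K \<le> \<theta>"
      moreover have "0 < real K" using \<open>r < K\<close> by simp
      ultimately show "eln (lawY r K \<theta> ?G) / ereal \<theta> \<le> ereal (ln (1/2))"
        using lawY_first_lessThan_le[OF \<open>1 \<le> r\<close> \<open>r < K\<close>] by (intro eln_div_le_ln) auto
    qed
    ultimately have "ereal (- ln (1/2)) \<le> J K ?zero"
      using LDP_rate_ge[OF assms(2)[OF \<open>r < K\<close>]] \<open>?zero \<in> simplex_r r\<close> by simp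
    then show ?thesis by (simp add: ln_div)
  qed
  then have "\<forall>\<^sub>F K in sequentially. ereal (ln 2) \<le> J K ?zero"
    by (intro eventually_sequentiallyI[of "Suc r"]) auto
  then have "ereal (ln 2) \<le> S_rate r ?zero" if "(\<lambda>K. J K ?zero) \<longlonglongrightarrow> S_rate r ?zero"
    using that by (intro tendsto_lowerbound) auto
  moreover have "S_rate r ?zero = 0" by (simp add: S_rate_def zero_ereal_def)
  ultimately show "\<not> (\<lambda>K. J K ?zero) \<longlonglongrightarrow> S_rate r ?zero" by auto
qed

end
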